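(* Let $Z$ be a nonempty compact metric space. Then there exists a dynamical system $(X,T)$ which is transitive compact but not totally transitive, such that the set $M$ of all minimal points of $(X,T)$ is homeomorphic to $Z$, every minimal point of $(X,T)$ is a fixed point, and $M=\omega_{\mathcal{N}_T}(x)$ for some $x\in X$.
   Context: A dynamical system $(X,T)$: $X$ is a compact metric space with more than one point and without isolated points, $T:X\to X$ a continuous surjection. A point is minimal if it lies in a minimal subset, i.e. a nonempty closed set $K$ with $TK=K$ containing no nonempty closed proper subset $K'$ with $TK'\subset K'$. "Opene" means open and nonempty. $N_T(U,V)=\{n\in\mathbb{Z}_+:U\cap T^{-n}V\neq\varnothing\}$. $(X,T)$ is transitive if $N_T(U,V)\neq\varnothing$ for all opene $U,V$; totally transitive if $(X,T^k)$ is transitive for all $k\in\mathbb{N}$. $\mathcal{N}_T$ is the family of all subsets of $\mathbb{Z}_+$ containing some $N_T(U,V)$ with $U,V$ opene; $\omega_{\mathcal{N}_T}(x)=\bigcap_{F\in\mathcal{N}_T}\overline{\{T^ix:i\in F\}}$; $(X,T)$ is transitive compact if $\omega_{\mathcal{N}_T}(x)\neq\varnothing$ for all $x$. *)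

theory Defs
  imports "HOL-Analysis.Analysis"
begin

definition dynsys :: "'a::metric_space set \<Rightarrow> ('a \<Rightarrow> 'a) \<Rightarrow> bool" where
  "dynsys X T \<longleftrightarrow> compact X \<and> (\<exists>x\<in>X. \<exists>y\<in>X. x \<noteq> y) \<and> (\<forall>x\<in>X. x islimpt X)
     \<and> continuous_on X T \<and> T ` X = X"

definition opene :: "'a::topological_space set \<Rightarrow> 'a set \<Rightarrow> bool" where
  "opene X U \<longleftrightarrow> openin (top_of_set X) U \<and> U \<noteq> {}"

definition hitting_times :: "('a \<Rightarrow> 'a) \<Rightarrow> 'a set \<Rightarrow> 'a set \<Rightarrow> nat set" where
  "hitting_times T U V = {n. U \<inter> ((T ^^ n) -` V) \<noteq> {}}"

definition transitive_sys :: "'a::topological_space set \<Rightarrow> ('a \<Rightarrow> 'a) \<Rightarrow> bool" where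
  "transitive_sys X T \<longleftrightarrow> (\<forall>U V. opene X U \<and> opene X V \<longrightarrow> hitting_times T U V \<noteq> {})"

definition totally_transitive :: "'a::topological_space set \<Rightarrow> ('a \<Rightarrow> 'a) \<Rightarrow> bool" where
  "totally_transitive X T \<longleftrightarrow> (\<forall>k::nat. k \<ge> 1 \<longrightarrow> transitive_sys X (T ^^ k))"

definition hitting_family :: "'a::topological_space set \<Rightarrow> ('a \<Rightarrow> 'a) \<Rightarrow> nat set set" where
  "hitting_family X T = {F. \<exists>U V. opene X U \<and> opene X V \<and> hitting_times T U V \<subseteq> F}"

definition omega_N :: "'a::topological_space set \<Rightarrow> ('a \<Rightarrow> 'a) \<Rightarrow> 'a \<Rightarrow> 'a set" where
  "omega_N X T x = (\<Inter>F\<in>hitting_family X T. closure {(T ^^ i) x | i. i \<in> F})"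

definition transitive_compact :: "'a::topological_space set \<Rightarrow> ('a \<Rightarrow> 'a) \<Rightarrow> bool" where
  "transitive_compact X T \<longleftrightarrow> (\<forall>x\<in>X. omega_N X T x \<noteq> {})"

definition minimal_set :: "'a::topological_space set \<Rightarrow> ('a \<Rightarrow> 'a) \<Rightarrow> 'a set \<Rightarrow> bool" where
  "minimal_set X T K \<longleftrightarrow> K \<noteq> {} \<and> K \<subseteq> X \<and> closed K \<and> T ` K = K \<and>
     \<not> (\<exists>K'. K' \<noteq> {} \<and> closed K' \<and> K' \<subset> K \<and> T ` K' \<subseteq> K')"

definition minimal_points :: "'a::topological_space set \<Rightarrow> ('a \<Rightarrow> 'a) \<Rightarrow> 'a set" where
  "minimal_points X T = {x. \<exists>K. minimal_set X T K \<and> x \<in> K}"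

end

theory Submission
  imports Defs "HOL-Library.Nat_Bijection" "HOL-Library.Log_Nat"
begin

text \<open>The phase space consists of sequences of pairs (mark in \<open>{0, 1}\<close>, label in \<open>Z\<close>)
  under the shift, where the label may change only right after a mark, any two marks are an
  even distance apart, and of any three marks \<open>i < j < k\<close> one of the gaps \<open>j - i\<close>, \<open>k - j\<close> is
  at least twice the other. Such lacunary marks cannot be syndetic, so a minimal point carries
  no mark at all and is a constant sequence: the minimal points form a copy of \<open>Z\<close> and are
  fixed. The parity condition breaks transitivity of \<open>T\<^sup>2\<close> (a mark at time \<open>0\<close> never reaches
  a mark at time \<open>1\<close> in an even number of steps), while gluing two words around an extra
  mark shows that every \<open>N\<^sub>T(U, V)\<close> contains all large times of one parity. Hence
  \<open>\<omega>\<^sub>\<N>(x)\<close> contains every common limit of \<open>T\<^sup>s x\<close> and \<open>T\<^sup>s\<^sup>+\<^sup>1 x\<close> along \<open>s \<rightarrow> \<infinity>\<close>; long unmarked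
  windows produce such limits, so \<open>\<omega>\<^sub>\<N>(x) \<noteq> {}\<close>. Conversely the hitting times between two
  mark cylinders force a point of \<open>\<omega>\<^sub>\<N>(x)\<close> to have marks of both parities, i.e. none.
  Finally a point whose labels run through a dense sequence of \<open>Z\<close> on ever longer blocks has
  all minimal points in its \<open>\<omega>\<^sub>\<N>\<close>.\<close>

section \<open>Embedding a compact metric space into \<open>\<real>\<^sup>\<nat>\<close>\<close>

lemma tendsto_coordinatewise_iff:
  fixes f :: "'b \<Rightarrow> 'i \<Rightarrow> real"
  shows "(f \<longlongrightarrow> l) F \<longleftrightarrow> (\<forall>i. ((\<lambda>c. f c i) \<longlongrightarrow> l i) F)"
proof -
  have "(f \<longlongrightarrow> l) F \<longleftrightarrow> limitin (product_topology (\<lambda>i. euclidean) UNIV) f l F"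
    by (simp add: euclidean_product_topology)
  also have "\<dots> \<longleftrightarrow> (\<forall>i. ((\<lambda>c. f c i) \<longlongrightarrow> l i) F)"
    by (subst limitin_componentwise) simp
  finally show ?thesis .
qed

lemma compact_dense_sequence:
  fixes Z :: "'a::metric_space set"
  assumes "compact Z" "Z \<noteq> {}"
  obtains d :: "nat \<Rightarrow> 'a" where "range d \<subseteq> Z" "Z \<subseteq> closure (range d)"
proof -
  have "\<exists>k. finite k \<and> k \<subseteq> Z \<and> Z \<subseteq> (\<Union>x\<in>k. ball x (1 / Suc n))" for n :: nat
    using compact_imp_seq_compact[OF assms(1), THEN seq_compact_imp_totally_bounded, rule_format,
        of "1 / Suc n"] by simp
  then obtain K where K: "\<And>n. finite (K n)" "\<And>n. K n \<subseteq> Z"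
    "\<And>n. Z \<subseteq> (\<Union>x\<in>K n. ball x (1 / Suc n))"
    by metis
  define D where "D = (\<Union>n. K n)"
  have "countable D" "D \<noteq> {}"
    using K assms(2) by (auto simp: D_def countable_finite)
  then have range_d: "range (from_nat_into D) = D"
    by (simp add: range_from_nat_into)
  have "Z \<subseteq> closure D"
  proof
    fix z assume "z \<in> Z"
    show "z \<in> closure D" unfolding closure_approachable
    proof (intro allI impI)
      fix e :: real assume "e > 0"
      then obtain n :: nat where n: "1 / Suc n < e" by (rule nat_approx_posE)
      then obtain x where "x \<in> K n" "dist x z < 1 / Suc n"
        using K(3)[of n] \<open>z \<in> Z\<close> by (fastforce simp: dist_commute)
      then show "\<exists>x\<in>D. dist x z < e" using n unfolding D_def by force
    qed
  qed
  then show ?thesis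
    using that[of "from_nat_into D"] range_d K(2) unfolding D_def by auto
qed

text \<open>Distances to a dense sequence embed a compact metric space in \<open>\<real>\<^sup>\<nat>\<close>.\<close>

lemma compact_embeds_in_sequence_space:
  fixes Z :: "'a::metric_space set"
  assumes "compact Z" "Z \<noteq> {}"
  obtains Z' :: "(nat \<Rightarrow> real) set" and q :: "nat \<Rightarrow> nat \<Rightarrow> real"
  where "compact Z'" "Z' homeomorphic Z" "range q \<subseteq> Z'" "Z' \<subseteq> closure (range q)"
proof -
  obtain d :: "nat \<Rightarrow> 'a" where d: "range d \<subseteq> Z" "Z \<subseteq> closure (range d)"
    using compact_dense_sequence[OF assms] .
  define h where "h z = (\<lambda>n. dist z (d n))" for z
  have cont_h: "continuous_on S h" for S
    unfolding h_def by (intro continuous_on_coordinatewise_then_product continuous_on_dist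
        continuous_on_id continuous_on_const)
  have "inj_on h Z"
  proof
    fix z w assume "z \<in> Z" "w \<in> Z" "h z = h w"
    then have same_dist: "dist z (d n) = dist w (d n)" for n
      using fun_cong[OF \<open>h z = h w\<close>, of n] unfolding h_def by simp
    have "dist z w < e" if "e > 0" for e
    proof -
      have "z \<in> closure (range d)" using d(2) \<open>z \<in> Z\<close> by blast
      then have "\<exists>y\<in>range d. dist y z < e / 2"
        using \<open>e > 0\<close> unfolding closure_approachable by (meson half_gt_zero)
      then obtain n where "dist z (d n) < e / 2" by (auto simp: dist_commute)
      then show ?thesis
        using dist_triangle2[of z w "d n"] same_dist[of n] by linarith
    qed
    then show "z = w" using zero_less_dist_iff by blast
  qed
  then have "h ` Z homeomorphic Z"
    using homeomorphic_compact[OF assms(1) cont_h refl] homeomorphic_sym by blast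
  moreover have "h ` Z \<subseteq> closure (h ` range d)"
    using image_mono[OF d(2), of h] image_closure_subset[OF cont_h closed_closure closure_subset]
    by (rule order_trans)
  ultimately show ?thesis
    using that[of "h ` Z" "h \<circ> d"] compact_continuous_image[OF cont_h assms(1)] d(1)
    by (simp add: image_comp) blast
qed

section \<open>Lacunary sets of natural numbers\<close>

definition lacunary :: "nat set \<Rightarrow> bool" where
  "lacunary S \<longleftrightarrow> (\<forall>i\<in>S. \<forall>j\<in>S. \<forall>k\<in>S. i < j \<longrightarrow> j < k \<longrightarrow>
     2 * (j - i) \<le> k - j \<or> 2 * (k - j) \<le> j - i)"

lemma lacunaryD:
  "lacunary S \<Longrightarrow> i \<in> S \<Longrightarrow> j \<in> S \<Longrightarrow> k \<in> S \<Longrightarrow> i < j \<Longrightarrow> j < k \<Longrightarrow>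
     2 * (j - i) \<le> k - j \<or> 2 * (k - j) \<le> j - i"
  unfolding lacunary_def by blast

lemma lacunary_subset: "lacunary S \<Longrightarrow> T \<subseteq> S \<Longrightarrow> lacunary T"
  unfolding lacunary_def by blast

lemma lacunary_translate: "lacunary S \<Longrightarrow> lacunary ((+) n ` S)"
  unfolding lacunary_def by auto

lemma lacunary_translate_preimage:
  assumes "lacunary S"
  shows "lacunary {j. j + m \<in> S}"
  unfolding lacunary_def
proof (intro ballI impI)
  fix i j k assume "i \<in> {j. j + m \<in> S}" "j \<in> {j. j + m \<in> S}" "k \<in> {j. j + m \<in> S}"
    "i < j" "j < k"
  then show "2 * (j - i) \<le> k - j \<or> 2 * (k - j) \<le> j - i"
    using lacunaryD[OF assms, of "i + m" "j + m" "k + m"] by simp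
qed

lemma lacunary_if_sparse:
  assumes "\<And>j k. j \<in> S \<Longrightarrow> k \<in> S \<Longrightarrow> j < k \<Longrightarrow> 3 * j \<le> k"
  shows "lacunary S"
  unfolding lacunary_def using assms by fastforce

lemma lacunary_Un:
  assumes "lacunary A" "lacunary B" "A \<subseteq> {..<a}" "B \<subseteq> {b..<b + w}" "3 * a \<le> b" "a + 2 * w \<le> b"
  shows "lacunary (A \<union> B)"
  unfolding lacunary_def
proof (intro ballI impI)
  fix i j k assume S: "i \<in> A \<union> B" "j \<in> A \<union> B" "k \<in> A \<union> B" and ijk: "i < j" "j < k"
  have A_below_B: "x < y" if "x \<in> A" "y \<in> B" for x y
    using that assms(3-5) by fastforce
  consider "k \<in> A" | "i \<in> B" | "i \<in> A" "j \<in> A" "k \<in> B" | "i \<in> A" "j \<in> B" "k \<in> B"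
    using S by blast
  then show "2 * (j - i) \<le> k - j \<or> 2 * (k - j) \<le> j - i"
  proof cases
    case 1
    then have "i \<in> A" "j \<in> A" using S ijk A_below_B by (meson less_asym UnE)+
    then show ?thesis using lacunaryD[OF assms(1) _ _ 1 ijk] by blast
  next
    case 2
    then have "j \<in> B" "k \<in> B" using S ijk A_below_B by (meson less_asym UnE)+
    then show ?thesis using lacunaryD[OF assms(2) 2 _ _ ijk] by blast
  next
    case 3
    then have "j < a" "b \<le> k" using assms(3,4) by auto
    then show ?thesis using assms(5) ijk by linarith
  next
    case 4
    then have "i < a" "b \<le> j" "k < b + w" using assms(3,4) by auto
    then show ?thesis using assms(6) ijk by linarith
  qed
qed

lemma lacunary_glue:
  assumes "lacunary A" "lacunary B" "0 < N" "3 * N \<le> c" "3 * (c + N) \<le> n"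
  shows "lacunary ((A \<inter> {..<N} \<union> {c}) \<union> (+) n ` (B \<inter> {..<N}))"
proof (rule lacunary_Un[where a = "Suc c" and b = n and w = N])
  show "lacunary (A \<inter> {..<N} \<union> {c})"
    by (rule lacunary_Un[where a = N and b = c and w = 1])
      (use lacunary_subset[OF assms(1)] assms(3,4) in \<open>auto simp: lacunary_def\<close>)
  show "lacunary ((+) n ` (B \<inter> {..<N}))"
    using lacunary_translate[OF lacunary_subset[OF assms(2)]] by blast
qed (use assms in auto)

text \<open>Otherwise \<open>S\<close> meets every window of length \<open>m\<close> after \<open>t\<^sub>0\<close>, and three elements taken
  from windows \<open>m + 1\<close> apart violate lacunarity.\<close>

lemma lacunary_not_syndetic:
  assumes "lacunary S"
  shows "\<exists>t\<ge>t0. \<forall>j<m. t + j \<notin> S"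
proof (rule ccontr)
  assume "\<not> ?thesis"
  then have window: "\<exists>i<m. t + i \<in> S" if "t \<ge> t0" for t
    using that by blast
  obtain i0 where i0: "i0 < m" "t0 + i0 \<in> S" using window by blast
  define a0 where "a0 = t0 + i0"
  obtain i1 where i1: "i1 < m" "a0 + m + 1 + i1 \<in> S" using window[of "a0 + m + 1"] a0_def by auto
  define a1 where "a1 = a0 + m + 1 + i1"
  obtain i2 where i2: "i2 < m" "a1 + m + 1 + i2 \<in> S" using window[of "a1 + m + 1"] a1_def a0_def by auto
  have "a0 < a1" "a1 < a1 + m + 1 + i2" unfolding a1_def by simp_all
  from lacunaryD[OF assms _ _ i2(2) this] i0 i1 a0_def a1_def
  have "2 * (a1 - a0) \<le> m + 1 + i2 \<or> 2 * (m + 1 + i2) \<le> a1 - a0" by simp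
  then show False using i1(1) i2(1) unfolding a1_def by simp
qed

section \<open>Minimal sets and \<open>\<omega>\<^sub>\<N>\<close> in a general dynamical system\<close>

lemma continuous_on_funpow:
  fixes T :: "'a::topological_space \<Rightarrow> 'a"
  assumes "continuous_on UNIV T"
  shows "continuous_on UNIV (T ^^ n)"
proof (induction n)
  case (Suc n)
  have "continuous_on UNIV (T \<circ> (T ^^ n))"
    by (rule continuous_on_compose[OF Suc continuous_on_subset[OF assms]]) simp
  then show ?case by simp
qed (simp add: continuous_on_id)

lemma minimal_set_orbit_closure:
  fixes T :: "'a::topological_space \<Rightarrow> 'a"
  assumes K: "minimal_set X T K" and "continuous_on K T" "y \<in> K"
  shows "closure (range (\<lambda>i. (T ^^ i) y)) = K"
proof -
  let ?O = "range (\<lambda>i. (T ^^ i) y)"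
  have TK: "T ` K = K" and "closed K"
    and K_min: "\<not> (\<exists>K'. K' \<noteq> {} \<and> closed K' \<and> K' \<subset> K \<and> T ` K' \<subseteq> K')"
    using K unfolding minimal_set_def by simp_all
  have "(T ^^ i) y \<in> K" for i
  proof (induction i)
    case (Suc i)
    then have "T ((T ^^ i) y) \<in> T ` K" by (rule imageI)
    then show ?case using TK by simp
  qed (simp add: \<open>y \<in> K\<close>)
  then have closure_sub: "closure ?O \<subseteq> K"
    by (intro closure_minimal \<open>closed K\<close>) blast
  have "T ((T ^^ i) y) \<in> ?O" for i
    using rangeI[of "\<lambda>i. (T ^^ i) y" "Suc i"] by simp
  then have "T ` ?O \<subseteq> ?O" by blast
  then have "T ` closure ?O \<subseteq> closure ?O"
    using image_closure_subset[OF continuous_on_subset[OF \<open>continuous_on K T\<close> closure_sub]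
        closed_closure] closure_subset by blast
  moreover have "closure ?O \<noteq> {}" by simp
  ultimately show ?thesis
    using K_min closure_sub by blast
qed

lemma minimal_set_uniform_return:
  fixes T :: "'a::topological_space \<Rightarrow> 'a"
  assumes K: "minimal_set X T K" "compact K" and T: "continuous_on UNIV T"
    and W: "open W" "W \<inter> K \<noteq> {}"
  obtains m where "\<And>y. y \<in> K \<Longrightarrow> \<exists>i<m. (T ^^ i) y \<in> W"
proof -
  have "\<exists>i. (T ^^ i) y \<in> W" if "y \<in> K" for y
  proof -
    have "W \<inter> closure (range (\<lambda>i. (T ^^ i) y)) \<noteq> {}"
      using minimal_set_orbit_closure[OF K(1) continuous_on_subset[OF T] that] W(2) by simp
    then show ?thesis using open_Int_closure_eq_empty[OF W(1)] by blast
  qed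
  then have "K \<subseteq> (\<Union>i\<in>UNIV. (T ^^ i) -` W)" by blast
  moreover have "open ((T ^^ i) -` W)" for i
    using open_vimage[OF W(1) continuous_on_funpow[OF T]] .
  ultimately obtain C where C: "finite C" "K \<subseteq> (\<Union>i\<in>C. (T ^^ i) -` W)"
    using compactE_image[OF K(2)] by metis
  have "i < Suc (Max (insert 0 C))" if "i \<in> C" for i
    using C(1) that by (simp add: le_imp_less_Suc)
  then show ?thesis
    using that[of "Suc (Max (insert 0 C))"] C(2) by blast
qed

lemma closed_omega_N: "closed (omega_N X T x)"
  unfolding omega_N_def by (intro closed_INT ballI closed_closure)

lemma omega_N_if_consecutive_limits:
  fixes T :: "'a::topological_space \<Rightarrow> 'a"
  assumes hit: "\<And>U V. opene X U \<Longrightarrow> opene X V \<Longrightarrow>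
      \<exists>r n0. \<forall>n\<ge>n0. even (n + r) \<longrightarrow> n \<in> hitting_times T U V"
    and s: "\<And>k. k \<le> s k"
    and lim: "((\<lambda>k. (T ^^ s k) x) \<longlongrightarrow> p) sequentially"
      "((\<lambda>k. (T ^^ Suc (s k)) x) \<longlongrightarrow> p) sequentially"
  shows "p \<in> omega_N X T x"
  unfolding omega_N_def
proof
  fix F assume "F \<in> hitting_family X T"
  then obtain U V where UV: "opene X U" "opene X V" and "hitting_times T U V \<subseteq> F"
    unfolding hitting_family_def by blast
  moreover obtain r n0 where "\<forall>n\<ge>n0. even (n + r) \<longrightarrow> n \<in> hitting_times T U V"
    using hit[OF UV] by blast
  ultimately have r: "\<And>n. n0 \<le> n \<Longrightarrow> even (n + r) \<Longrightarrow> n \<in> F"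
    by blast
  let ?A = "{(T ^^ i) x | i. i \<in> F}"
  show "p \<in> closure ?A"
  proof (rule ccontr)
    assume "p \<notin> closure ?A"
    then have p: "p \<in> - closure ?A" by simp
    have "open (- closure ?A)" by (rule open_Compl[OF closed_closure])
    note nhd = topological_tendstoD[OF lim(1) this p] topological_tendstoD[OF lim(2) this p]
    from nhd eventually_ge_at_top[of n0] have "eventually (\<lambda>k. (T ^^ s k) x \<notin> closure ?A \<and>
        (T ^^ Suc (s k)) x \<notin> closure ?A \<and> n0 \<le> k) sequentially"
      by eventually_elim simp
    then obtain k where k: "(T ^^ s k) x \<notin> closure ?A" "(T ^^ Suc (s k)) x \<notin> closure ?A"
        "n0 \<le> k"
      unfolding eventually_sequentially by blast
    have "n0 \<le> s k" using k(3) s[of k] by simp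
    have "even (s k + r) \<or> even (Suc (s k) + r)" by (cases "even (s k + r)") simp_all
    then have "s k \<in> F \<or> Suc (s k) \<in> F"
      using r[OF \<open>n0 \<le> s k\<close>] r[OF le_SucI[OF \<open>n0 \<le> s k\<close>]] by blast
    then have "(T ^^ s k) x \<in> ?A \<or> (T ^^ Suc (s k)) x \<in> ?A" by blast
    then show False
      using k(1,2) closure_subset[of ?A] by blast
  qed
qed

section \<open>Marked sequences\<close>

text \<open>A point of \<open>\<real>\<^sup>\<nat>\<close> is read, through the pairing \<open>prod_encode\<close>, as a sequence of
  pairs: coordinate \<open>(j, 0)\<close> is the mark at time \<open>j\<close>, the coordinates \<open>(j, Suc k)\<close> form the
  label at time \<open>j\<close>, itself a point of \<open>\<real>\<^sup>\<nat>\<close>.\<close>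

definition mark :: "(nat \<Rightarrow> real) \<Rightarrow> nat \<Rightarrow> real" where
  "mark x j = x (prod_encode (j, 0))"

definition label :: "(nat \<Rightarrow> real) \<Rightarrow> nat \<Rightarrow> nat \<Rightarrow> real" where
  "label x j = (\<lambda>k. x (prod_encode (j, Suc k)))"

definition marked_point :: "(nat \<Rightarrow> real) \<Rightarrow> (nat \<Rightarrow> nat \<Rightarrow> real) \<Rightarrow> nat \<Rightarrow> real" where
  "marked_point b z n = (case prod_decode n of (j, 0) \<Rightarrow> b j | (j, Suc k) \<Rightarrow> z j k)"

lemma mark_marked_point [simp]: "mark (marked_point b z) j = b j"
  by (simp add: mark_def marked_point_def)

lemma label_marked_point [simp]: "label (marked_point b z) j = z j"
  by (simp add: label_def marked_point_def)

lemma apply_eq_if_mark_label_eq: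
  assumes "mark x (fst (prod_decode n)) = mark y (fst (prod_decode n))"
    and "label x (fst (prod_decode n)) = label y (fst (prod_decode n))"
  shows "x n = y n"
proof -
  obtain j k where n: "n = prod_encode (j, k)"
    using prod_decode_inverse[of n] by (cases "prod_decode n") auto
  then show ?thesis
    using assms by (cases k) (simp_all add: mark_def label_def fun_eq_iff)
qed

lemma marked_point_eqI:
  "(\<And>j. mark x j = mark y j) \<Longrightarrow> (\<And>j. label x j = label y j) \<Longrightarrow> x = y"
  using apply_eq_if_mark_label_eq by blast

lemma continuous_on_mark: "continuous_on S (\<lambda>x. mark x j)"
  unfolding mark_def by (rule continuous_on_subset[OF continuous_on_product_coordinates]) simp

lemma continuous_on_label: "continuous_on S (\<lambda>x. label x j)"
  unfolding label_def
  by (rule continuous_on_coordinatewise_then_product,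
      rule continuous_on_subset[OF continuous_on_product_coordinates]) simp

lemma open_contains_cylinder:
  assumes "open W" "x \<in> W"
  obtains N where "\<And>y. (\<And>j. j < N \<Longrightarrow> mark y j = mark x j \<and> label y j = label x j) \<Longrightarrow> y \<in> W"
proof -
  have "openin (product_topology (\<lambda>i. euclidean) UNIV) W"
    using assms(1) by (simp add: open_fun_def)
  from product_topology_open_contains_basis[OF this assms(2)]
  obtain B :: "nat \<Rightarrow> real set" where B: "x \<in> PiE UNIV B"
      "finite {i. B i \<noteq> UNIV}" "PiE UNIV B \<subseteq> W"
    by auto
  define N where "N = Suc (Max (insert 0 {i. B i \<noteq> UNIV}))"
  have "fst (prod_decode i) < N" if "B i \<noteq> UNIV" for i
  proof -
    have "fst (prod_decode i) \<le> i"
      using le_prod_encode_1[of "fst (prod_decode i)" "snd (prod_decode i)"] by simp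
    also have "i < N" unfolding N_def using B(2) that by (simp add: le_imp_less_Suc)
    finally show ?thesis .
  qed
  then have "y \<in> W" if "\<And>j. j < N \<Longrightarrow> mark y j = mark x j \<and> label y j = label x j" for y
    using B(1,3) that apply_eq_if_mark_label_eq[of y _ x] by (fastforce simp: PiE_UNIV_domain)
  then show ?thesis using that by blast
qed

definition shift :: "(nat \<Rightarrow> real) \<Rightarrow> nat \<Rightarrow> real" where
  "shift x = marked_point (\<lambda>j. mark x (Suc j)) (\<lambda>j. label x (Suc j))"

lemma mark_shift [simp]: "mark (shift x) j = mark x (Suc j)"
  and label_shift [simp]: "label (shift x) j = label x (Suc j)"
  by (simp_all add: shift_def)

lemma mark_funpow_shift [simp]: "mark ((shift ^^ m) x) j = mark x (j + m)"
  and label_funpow_shift [simp]: "label ((shift ^^ m) x) j = label x (j + m)"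
  by (induction m arbitrary: j) simp_all

lemma funpow_shift_apply: "(shift ^^ m) x n = x (prod_encode (fst (prod_decode n) + m, snd (prod_decode n)))"
proof -
  obtain j k where "n = prod_encode (j, k)"
    using prod_decode_inverse[of n] by (cases "prod_decode n") auto
  then show ?thesis
    using mark_funpow_shift[of m x j] fun_cong[OF label_funpow_shift[of m x j]]
    by (cases k) (simp_all add: mark_def label_def)
qed

lemma continuous_on_funpow_shift: "continuous_on S (shift ^^ m)"
  unfolding funpow_shift_apply[abs_def]
  by (rule continuous_on_coordinatewise_then_product,
      rule continuous_on_subset[OF continuous_on_product_coordinates]) simp

lemma continuous_on_shift: "continuous_on S shift"
  using continuous_on_funpow_shift[of S 1] by simp

definition const_point :: "(nat \<Rightarrow> real) \<Rightarrow> nat \<Rightarrow> real" where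
  "const_point z = marked_point (\<lambda>_. 0) (\<lambda>_. z)"

lemma mark_const_point [simp]: "mark (const_point z) j = 0"
  and label_const_point [simp]: "label (const_point z) j = z"
  by (simp_all add: const_point_def)

lemma shift_const_point [simp]: "shift (const_point z) = const_point z"
  by (rule marked_point_eqI) simp_all

lemma continuous_on_const_point: "continuous_on S const_point"
proof (intro continuous_on_coordinatewise_then_product)
  fix n
  obtain j k where "n = prod_encode (j, k)"
    using prod_decode_inverse[of n] by (cases "prod_decode n") auto
  then show "continuous_on S (\<lambda>z. const_point z n)"
    by (cases k) (simp_all add: const_point_def marked_point_def
        continuous_on_subset[OF continuous_on_product_coordinates])
qed

lemma inj_const_point: "inj const_point"
  by (rule injI) (metis label_const_point)

lemma funpow_shift_tendsto_const_point:
  assumes windows: "\<And>j. eventually (\<lambda>k. mark x (s k + j) = 0 \<and> label x (s k + j) = w k) F"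
    and "(w \<longlongrightarrow> l) F"
  shows "((\<lambda>k. (shift ^^ s k) x) \<longlongrightarrow> const_point l) F"
  unfolding tendsto_coordinatewise_iff
proof
  fix n
  define j where "j = fst (prod_decode n)"
  have "((\<lambda>k. const_point (w k)) \<longlongrightarrow> const_point l) F"
    by (rule continuous_on_tendsto_compose[OF continuous_on_const_point[of UNIV] assms(2)]) auto
  then have "((\<lambda>k. const_point (w k) n) \<longlongrightarrow> const_point l n) F"
    unfolding tendsto_coordinatewise_iff by blast
  moreover have "eventually (\<lambda>k. const_point (w k) n = (shift ^^ s k) x n) F"
    using windows[of j]
    by eventually_elim (rule apply_eq_if_mark_label_eq, simp_all add: j_def add.commute)
  ultimately show "((\<lambda>k. (shift ^^ s k) x n) \<longlongrightarrow> const_point l n) F"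
    by (rule Lim_transform_eventually)
qed

definition marks :: "(nat \<Rightarrow> real) \<Rightarrow> nat set" where
  "marks x = {j. mark x j = 1}"

lemma marks_funpow_shift [simp]: "marks ((shift ^^ m) x) = {j. j + m \<in> marks x}"
  by (simp add: marks_def)

definition glue :: "(nat \<Rightarrow> real) \<Rightarrow> nat \<Rightarrow> nat \<Rightarrow> nat \<Rightarrow> (nat \<Rightarrow> real) \<Rightarrow> nat \<Rightarrow> real" where
  "glue x N c n w = marked_point
     (\<lambda>j. if j < N then mark x j else if j = c then 1
          else if n \<le> j \<and> j < n + N then mark w (j - n) else 0)
     (\<lambda>j. if j \<le> c then label x (min j (N - 1)) else label w (min (j - n) (N - 1)))"

lemma glue_prefix:
  "N \<le> c \<Longrightarrow> j < N \<Longrightarrow> mark (glue x N c n w) j = mark x j \<and> label (glue x N c n w) j = label x j"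
  by (simp add: glue_def)

lemma glue_suffix:
  "N \<le> c \<Longrightarrow> c < n \<Longrightarrow> j < N \<Longrightarrow>
     mark (glue x N c n w) (n + j) = mark w j \<and> label (glue x N c n w) (n + j) = label w j"
  by (simp add: glue_def)

lemma marks_glue:
  assumes "N \<le> c" "c < n"
  shows "marks (glue x N c n w) = (marks x \<inter> {..<N} \<union> {c}) \<union> (+) n ` (marks w \<inter> {..<N})"
proof -
  have "j \<in> (+) n ` (marks w \<inter> {..<N}) \<longleftrightarrow> n \<le> j \<and> j < n + N \<and> j - n \<in> marks w" for j
    by (auto intro!: image_eqI[of j _ "j - n"])
  moreover have "j \<in> marks (glue x N c n w) \<longleftrightarrow>
      j < N \<and> j \<in> marks x \<or> j = c \<or> n \<le> j \<and> j < n + N \<and> j - n \<in> marks w" for j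
    using assms by (auto simp: glue_def marks_def)
  ultimately show ?thesis by blast
qed

text \<open>Each condition is a disjunction of closed conditions on finitely many coordinates,
  which makes closedness immediate; \<open>mem_marked_space_iff\<close> gives the readable form.\<close>

definition marked_space :: "(nat \<Rightarrow> real) set \<Rightarrow> (nat \<Rightarrow> real) set" where
  "marked_space Z = {x. (\<forall>j. mark x j = 0 \<or> mark x j = 1) \<and> (\<forall>j. label x j \<in> Z) \<and>
     (\<forall>j. mark x j = 1 \<or> label x (Suc j) = label x j) \<and>
     (\<forall>i j. mark x i = 0 \<or> mark x j = 0 \<or> even (i + j)) \<and>
     (\<forall>i j k. i < j \<longrightarrow> j < k \<longrightarrow> mark x i = 0 \<or> mark x j = 0 \<or> mark x k = 0 \<or>
        2 * (j - i) \<le> k - j \<or> 2 * (k - j) \<le> j - i)}"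

lemma mem_marked_space_iff:
  "x \<in> marked_space Z \<longleftrightarrow> (\<forall>j. mark x j = 0 \<or> mark x j = 1) \<and> (\<forall>j. label x j \<in> Z) \<and>
     (\<forall>j. j \<notin> marks x \<longrightarrow> label x (Suc j) = label x j) \<and>
     (\<forall>i\<in>marks x. \<forall>j\<in>marks x. even (i + j)) \<and> lacunary (marks x)"
proof (cases "\<forall>j. mark x j = 0 \<or> mark x j = 1")
  case True
  then have "mark x j = 0 \<longleftrightarrow> j \<notin> marks x" "mark x j = 1 \<longleftrightarrow> j \<in> marks x" for j
    unfolding marks_def by force+
  then show ?thesis
    unfolding marked_space_def lacunary_def mem_Collect_eq by (simp only:) blast
qed (auto simp: marked_space_def)

lemma closed_marked_space:
  assumes "closed Z"
  shows "closed (marked_space Z)"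
proof -
  have "closed {x. mark x j = c}" for j c
    by (rule closed_Collect_eq[OF continuous_on_mark continuous_on_const])
  moreover have "closed {x. label x j \<in> Z}" for j
    using closed_vimage[OF assms continuous_on_label[of UNIV j]] by (simp add: vimage_def)
  moreover have "closed {x. label x (Suc j) = label x j}" for j
    by (rule closed_Collect_eq[OF continuous_on_label continuous_on_label])
  ultimately show ?thesis
    unfolding marked_space_def
    by (intro closed_Collect_conj closed_Collect_all closed_Collect_imp closed_Collect_disj
        closed_Collect_const open_Collect_const) auto
qed

lemma compact_marked_space:
  assumes "compact Z"
  shows "compact (marked_space Z)"
proof -
  define B where
    "B n = (case prod_decode n of (j, 0) \<Rightarrow> {0, 1} | (j, Suc k) \<Rightarrow> (\<lambda>z. z k) ` Z)" for n
  have "compact ((\<lambda>z::nat \<Rightarrow> real. z k) ` Z)" for k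
    by (rule compact_continuous_image[OF continuous_on_subset[OF continuous_on_product_coordinates]
          assms]) simp
  then have "compact (B n)" for n
    unfolding B_def by (auto split: prod.split nat.split)
  then have "compactin (product_topology (\<lambda>i. euclidean) UNIV) (PiE UNIV B)"
    by (simp add: compactin_PiE)
  then have compact_box: "compact (PiE UNIV B)"
    by (simp add: euclidean_product_topology)
  have "marked_space Z \<subseteq> PiE UNIV B"
  proof
    fix x assume x: "x \<in> marked_space Z"
    have "x n \<in> B n" for n
    proof -
      obtain j k where n: "n = prod_encode (j, k)"
        using prod_decode_inverse[of n] by (cases "prod_decode n") auto
      show ?thesis
        using x n fun_cong[of "label x j" _ "k - 1"]
        by (cases k) (auto simp: B_def marked_space_def mark_def label_def)
    qed
    then show "x \<in> PiE UNIV B" by (simp add: PiE_UNIV_domain)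
  qed
  then show ?thesis
    using compact_Int_closed[OF compact_box closed_marked_space[OF compact_imp_closed[OF assms]]]
    by (simp add: Int_absorb1)
qed

locale marked_system =
  fixes Z :: "(nat \<Rightarrow> real) set"
  assumes compact_Z: "compact Z" and Z_nonempty: "Z \<noteq> {}"
begin

abbreviation "X \<equiv> marked_space Z"

lemma mark_0_or_1: "x \<in> X \<Longrightarrow> mark x j = 0 \<or> mark x j = 1"
  and label_mem: "x \<in> X \<Longrightarrow> label x j \<in> Z"
  and label_Suc_eq: "x \<in> X \<Longrightarrow> j \<notin> marks x \<Longrightarrow> label x (Suc j) = label x j"
  and even_add_marks: "x \<in> X \<Longrightarrow> i \<in> marks x \<Longrightarrow> j \<in> marks x \<Longrightarrow> even (i + j)"
  and lacunary_marks: "x \<in> X \<Longrightarrow> lacunary (marks x)"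
  unfolding mem_marked_space_iff by blast+

lemma marks_common_parity:
  assumes "x \<in> X"
  obtains r where "\<And>j. j \<in> marks x \<Longrightarrow> even (j + r)"
proof (cases "marks x = {}")
  case False
  then obtain i where "i \<in> marks x" by blast
  then show ?thesis using that even_add_marks[OF assms] by blast
qed (use that in blast)

lemma funpow_shift_mem:
  assumes "x \<in> X"
  shows "(shift ^^ m) x \<in> X"
  unfolding mem_marked_space_iff marks_funpow_shift
proof (intro conjI allI impI ballI)
  show "mark ((shift ^^ m) x) j = 0 \<or> mark ((shift ^^ m) x) j = 1"
    "label ((shift ^^ m) x) j \<in> Z" for j
    using mark_0_or_1[OF assms] label_mem[OF assms] by simp_all
  show "label ((shift ^^ m) x) (Suc j) = label ((shift ^^ m) x) j" if "j \<notin> {j. j + m \<in> marks x}" for j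
    using that label_Suc_eq[OF assms, of "j + m"] by simp
  show "even (i + j)" if "i \<in> {j. j + m \<in> marks x}" "j \<in> {j. j + m \<in> marks x}" for i j
    using that even_add_marks[OF assms, of "i + m" "j + m"] by simp presburger
  show "lacunary {j. j + m \<in> marks x}"
    by (rule lacunary_translate_preimage[OF lacunary_marks[OF assms]])
qed

lemma shift_image: "shift ` X = X"
proof
  show "shift ` X \<subseteq> X"
    using funpow_shift_mem[of _ 1] by auto
  show "X \<subseteq> shift ` X"
  proof
    fix y assume y: "y \<in> X"
    define x where "x = marked_point (\<lambda>j. if j = 0 then 0 else mark y (j - 1))
      (\<lambda>j. label y (j - 1))"
    have marks_x: "marks x = Suc ` marks y"
      by (auto simp: x_def marks_def image_iff gr0_conv_Suc)
    have "shift x = y"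
      by (rule marked_point_eqI) (simp_all add: x_def)
    moreover have "x \<in> X"
      unfolding mem_marked_space_iff marks_x
    proof (intro conjI allI impI ballI)
      show "mark x j = 0 \<or> mark x j = 1" "label x j \<in> Z" for j
        using mark_0_or_1[OF y] label_mem[OF y] by (simp_all add: x_def)
      show "label x (Suc j) = label x j" if "j \<notin> Suc ` marks y" for j
      proof (cases j)
        case (Suc i)
        then have "i \<notin> marks y" using that by blast
        then show ?thesis using label_Suc_eq[OF y] Suc by (simp add: x_def)
      qed (simp add: x_def)
      show "even (i + j)" if ij: "i \<in> Suc ` marks y" "j \<in> Suc ` marks y" for i j
      proof -
        obtain a b where "i = Suc a" "j = Suc b" "a \<in> marks y" "b \<in> marks y"
          using ij by blast
        then show ?thesis using even_add_marks[OF y, of a b] by simp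
      qed
      show "lacunary (Suc ` marks y)"
        using lacunary_translate[OF lacunary_marks[OF y], of 1] by simp
    qed
    ultimately show "y \<in> shift ` X" by blast
  qed
qed

lemma label_constant_while_unmarked:
  assumes "x \<in> X" "\<And>i. i < j \<Longrightarrow> t + i \<notin> marks x"
  shows "label x (t + j) = label x t"
  using assms(2)
proof (induction j)
  case (Suc j)
  then show ?case using label_Suc_eq[OF assms(1), of "t + j"] by simp
qed simp

lemma unmarked_eq_const_point:
  assumes "x \<in> X" "marks x = {}"
  shows "x = const_point (label x 0)"
proof (rule marked_point_eqI)
  show "mark x j = mark (const_point (label x 0)) j" for j
    using assms mark_0_or_1[OF assms(1), of j] by (auto simp: marks_def)
  show "label x j = label (const_point (label x 0)) j" for j
    using label_constant_while_unmarked[OF assms(1), of j 0] assms(2) by simp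
qed

lemma const_point_mem: "z \<in> Z \<Longrightarrow> const_point z \<in> X"
  by (simp add: mem_marked_space_iff marks_def lacunary_def)

definition single_mark :: "(nat \<Rightarrow> real) \<Rightarrow> nat \<Rightarrow> nat \<Rightarrow> real" where
  "single_mark z a = marked_point (\<lambda>j. if j = a then 1 else 0) (\<lambda>_. z)"

lemma single_mark_mem: "z \<in> Z \<Longrightarrow> single_mark z a \<in> X"
  by (simp add: single_mark_def mem_marked_space_iff marks_def lacunary_def)

lemma label_min_Suc_eq:
  "x \<in> X \<Longrightarrow> (j < M \<Longrightarrow> j \<notin> marks x) \<Longrightarrow> label x (min (Suc j) M) = label x (min j M)"
  using label_Suc_eq[of x j] by (cases "j < M") simp_all

lemma label_glue_Suc:
  assumes x: "x \<in> X" and w: "w \<in> X" and Nc: "N \<le> c" "c < n"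
    and unmarked: "j \<notin> marks (glue x N c n w)"
  shows "label (glue x N c n w) (Suc j) = label (glue x N c n w) j"
proof -
  note marks_y = unmarked[unfolded marks_glue[OF Nc]]
  then have "j \<noteq> c" by blast
  then consider "j < c" | "c < j" "j < n" | "n \<le> j"
    by fastforce
  then show ?thesis
  proof cases
    case 1
    then have "label x (min (Suc j) (N - 1)) = label x (min j (N - 1))"
      using marks_y by (intro label_min_Suc_eq[OF x]) auto
    then show ?thesis using 1 by (simp add: glue_def)
  next
    case 2
    then show ?thesis by (simp add: glue_def)
  next
    case 3
    then have "label w (min (Suc (j - n)) (N - 1)) = label w (min (j - n) (N - 1))"
      using marks_y by (intro label_min_Suc_eq[OF w]) (auto intro!: image_eqI[of j _ "j - n"])
    then show ?thesis using 3 Nc by (simp add: glue_def Suc_diff_le)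
  qed
qed

lemma glue_mem:
  assumes x: "x \<in> X" and w: "w \<in> X" and N: "0 < N" "3 * N \<le> c" "3 * (c + N) \<le> n"
    and parity_x: "\<And>j. j \<in> marks x \<Longrightarrow> even (j + c)"
    and parity_w: "\<And>j. j \<in> marks w \<Longrightarrow> even (j + n + c)"
  shows "glue x N c n w \<in> X"
  unfolding mem_marked_space_iff
proof (intro conjI allI impI ballI)
  let ?y = "glue x N c n w"
  have Nc: "N \<le> c" "c < n" using N by simp_all
  show "mark ?y j = 0 \<or> mark ?y j = 1" "label ?y j \<in> Z" for j
    using mark_0_or_1[OF x, of j] mark_0_or_1[OF w, of "j - n"] label_mem[OF x] label_mem[OF w]
    by (simp_all add: glue_def)
  show "label ?y (Suc j) = label ?y j" if "j \<notin> marks ?y" for j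
    by (rule label_glue_Suc[OF x w Nc that])
  have parity_y: "even (j + c)" if "j \<in> marks ?y" for j
    using that parity_x parity_w unfolding marks_glue[OF Nc] by fastforce
  show "even (i + j)" if "i \<in> marks ?y" "j \<in> marks ?y" for i j
    using parity_y[OF that(1)] parity_y[OF that(2)] by presburger
  show "lacunary (marks ?y)"
    unfolding marks_glue[OF Nc] by (rule lacunary_glue[OF lacunary_marks[OF x] lacunary_marks[OF w] N])
qed

lemma hitting_times_contain_parity_class:
  assumes "opene X U" "opene X V"
  shows "\<exists>r n0. \<forall>n\<ge>n0. even (n + r) \<longrightarrow> n \<in> hitting_times shift U V"
proof -
  obtain OU OV where open_UV: "open OU" "open OV" and UV: "U = X \<inter> OU" "V = X \<inter> OV"
    using assms unfolding opene_def openin_open by blast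
  obtain x w where "x \<in> U" "w \<in> V" using assms unfolding opene_def by blast
  then have x: "x \<in> X" "x \<in> OU" and w: "w \<in> X" "w \<in> OV" using UV by auto
  obtain N1 where N1: "\<And>y. (\<And>j. j < N1 \<Longrightarrow> mark y j = mark x j \<and> label y j = label x j) \<Longrightarrow> y \<in> OU"
    using open_contains_cylinder[OF open_UV(1) x(2)] by blast
  obtain N2 where N2: "\<And>y. (\<And>j. j < N2 \<Longrightarrow> mark y j = mark w j \<and> label y j = label w j) \<Longrightarrow> y \<in> OV"
    using open_contains_cylinder[OF open_UV(2) w(2)] by blast
  obtain rx where rx: "\<And>j. j \<in> marks x \<Longrightarrow> even (j + rx)" using marks_common_parity[OF x(1)] by blast
  obtain rw where rw: "\<And>j. j \<in> marks w \<Longrightarrow> even (j + rw)" using marks_common_parity[OF w(1)] by blast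
  define N where "N = Suc (N1 + N2)"
  define c where "c = 4 * N + rx"
  have "n \<in> hitting_times shift U V" if n: "3 * (c + N) \<le> n" "even (n + (c + rw))" for n
  proof -
    define y where "y = glue x N c n w"
    have "N \<le> c" "c < n" using n unfolding c_def N_def by simp_all
    have "y \<in> X"
      unfolding y_def using x(1) w(1)
    proof (rule glue_mem)
      show "even (j + c)" if "j \<in> marks x" for j
        using rx[OF that] unfolding c_def by presburger
      show "even (j + n + c)" if "j \<in> marks w" for j
        using rw[OF that] n(2) by presburger
    qed (use n in \<open>simp_all add: N_def c_def\<close>)
    moreover have "y \<in> OU"
      using N1 glue_prefix[OF \<open>N \<le> c\<close>] unfolding y_def N_def by simp
    moreover have "(shift ^^ n) y \<in> OV"
      using N2 glue_suffix[OF \<open>N \<le> c\<close> \<open>c < n\<close>] unfolding y_def N_def by (simp add: add.commute)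
    ultimately show ?thesis
      using funpow_shift_mem[OF \<open>y \<in> X\<close>] UV unfolding hitting_times_def by blast
  qed
  then show ?thesis by blast
qed

lemma perfect:
  assumes x: "x \<in> X"
  shows "x islimpt X"
proof (unfold islimpt_def, intro allI impI)
  fix W assume "x \<in> W" "open W"
  obtain K where K: "\<And>y. (\<And>j. j < K \<Longrightarrow> mark y j = mark x j \<and> label y j = label x j) \<Longrightarrow> y \<in> W"
    using open_contains_cylinder[OF \<open>open W\<close> \<open>x \<in> W\<close>] by blast
  obtain r where r: "\<And>j. j \<in> marks x \<Longrightarrow> even (j + r)" using marks_common_parity[OF x] by blast
  define N where "N = Suc K"
  define c where "c = 4 * N + r"
  define n where "n = 6 * (c + 2 + N)"
  have glued: "glue x N (c + 2 * k) n x \<in> X \<inter> W" if "k \<le> 1" for k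
  proof
    show "glue x N (c + 2 * k) n x \<in> X"
      using x x
    proof (rule glue_mem)
      show "even (j + (c + 2 * k))" if "j \<in> marks x" for j
        using r[OF that] unfolding c_def by presburger
      show "even (j + n + (c + 2 * k))" if "j \<in> marks x" for j
        using r[OF that] unfolding c_def n_def by presburger
    qed (use that in \<open>simp_all add: N_def c_def n_def\<close>)
    show "glue x N (c + 2 * k) n x \<in> W"
      by (rule K) (simp add: glue_prefix N_def c_def)
  qed
  have "mark (glue x N c n x) c \<noteq> mark (glue x N (c + 2) n x) c"
    by (simp add: glue_def N_def c_def n_def)
  then have "glue x N c n x \<noteq> x \<or> glue x N (c + 2) n x \<noteq> x" by metis
  then show "\<exists>y\<in>X. y \<in> W \<and> y \<noteq> x"
    using glued[of 0] glued[of 1] by auto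
qed

definition mark_cylinder :: "nat \<Rightarrow> (nat \<Rightarrow> real) set" where
  "mark_cylinder a = X \<inter> {y. mark y a > 1 / 2}"

lemma opene_mark_cylinder: "opene X (mark_cylinder a)"
proof -
  obtain z where "z \<in> Z" using Z_nonempty by blast
  have "open {y. mark y a > 1 / 2}"
    by (rule open_Collect_less[OF continuous_on_const continuous_on_mark])
  moreover have "single_mark z a \<in> mark_cylinder a"
    using single_mark_mem[OF \<open>z \<in> Z\<close>] by (simp add: mark_cylinder_def single_mark_def)
  ultimately show ?thesis
    unfolding opene_def mark_cylinder_def by blast
qed

lemma mark_cylinder_mark: "y \<in> mark_cylinder a \<Longrightarrow> a \<in> marks y"
  using mark_0_or_1[of y a] by (auto simp: mark_cylinder_def marks_def)

lemma hitting_times_mark_cylinder_even: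
  assumes "n \<in> hitting_times shift (mark_cylinder a) (mark_cylinder b)"
  shows "even (a + b + n)"
proof -
  obtain y where y: "y \<in> mark_cylinder a" "(shift ^^ n) y \<in> mark_cylinder b"
    using assms unfolding hitting_times_def by blast
  then have "y \<in> X" by (simp add: mark_cylinder_def)
  moreover have "a \<in> marks y" "b + n \<in> marks y"
    using mark_cylinder_mark[OF y(1)] mark_cylinder_mark[OF y(2)] by simp_all
  ultimately have "even (a + (b + n))" by (rule even_add_marks)
  then show ?thesis by (simp add: add.assoc)
qed

lemma not_totally_transitive: "\<not> totally_transitive X shift"
proof
  assume "totally_transitive X shift"
  then have "transitive_sys X (shift ^^ 2)"
    unfolding totally_transitive_def by simp
  then obtain n where "n \<in> hitting_times (shift ^^ 2) (mark_cylinder 0) (mark_cylinder 1)"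
    using opene_mark_cylinder unfolding transitive_sys_def by blast
  then have "2 * n \<in> hitting_times shift (mark_cylinder 0) (mark_cylinder 1)"
    by (simp add: hitting_times_def funpow_mult mult.commute)
  then show False
    using hitting_times_mark_cylinder_even by fastforce
qed

lemma dynsys_marked_shift: "dynsys X shift"
proof -
  obtain z where z: "z \<in> Z" using Z_nonempty by blast
  have "mark (const_point z) 0 \<noteq> mark (single_mark z 0) 0"
    by (simp add: single_mark_def)
  then have "\<exists>x\<in>X. \<exists>y\<in>X. x \<noteq> y"
    using const_point_mem[OF z] single_mark_mem[OF z] by metis
  then show ?thesis
    unfolding dynsys_def using compact_marked_space[OF compact_Z] perfect continuous_on_shift
      shift_image by blast
qed

end

section \<open>Minimal points and \<open>\<omega>\<^sub>\<N>\<close> of the marked shift\<close>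

context marked_system
begin

lemma minimal_set_unmarked:
  assumes K: "minimal_set X shift K" and "x \<in> K"
  shows "marks x = {}"
proof (rule ccontr)
  assume "marks x \<noteq> {}"
  then obtain p where p: "p \<in> marks x" by blast
  have K_sub: "K \<subseteq> X" "closed K" "shift ` K = K"
    using K unfolding minimal_set_def by blast+
  have "compact (X \<inter> K)"
    by (rule compact_Int_closed[OF compact_marked_space[OF compact_Z] K_sub(2)])
  then have "compact K"
    using K_sub(1) by (simp add: Int_absorb1)
  have orbit_in_K: "(shift ^^ i) x \<in> K" for i
    by (induction i) (use \<open>x \<in> K\<close> K_sub(3) in auto)
  define W where "W = {y. mark y 0 > 1 / 2}"
  have "open W"
    unfolding W_def by (rule open_Collect_less[OF continuous_on_const continuous_on_mark])
  moreover have "(shift ^^ p) x \<in> W \<inter> K"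
    using p orbit_in_K by (simp add: W_def marks_def)
  ultimately obtain m where m: "\<And>y. y \<in> K \<Longrightarrow> \<exists>i<m. (shift ^^ i) y \<in> W"
    using minimal_set_uniform_return[OF K \<open>compact K\<close> continuous_on_shift \<open>open W\<close>] by blast
  obtain t where t: "\<And>j. j < m \<Longrightarrow> t + j \<notin> marks x"
    using lacunary_not_syndetic[OF lacunary_marks[of x], of 0 m] K_sub(1) \<open>x \<in> K\<close> by blast
  obtain i where "i < m" "(shift ^^ i) ((shift ^^ t) x) \<in> W"
    using m[OF orbit_in_K[of t]] by blast
  then have "t + i \<in> marks x"
    using mark_0_or_1[of x "t + i"] K_sub(1) \<open>x \<in> K\<close>
    by (auto simp: W_def marks_def funpow_add[symmetric] add.commute)
  then show False using t \<open>i < m\<close> by blast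
qed

lemma minimal_points_eq: "minimal_points X shift = const_point ` Z"
proof
  show "const_point ` Z \<subseteq> minimal_points X shift"
  proof
    fix y assume "y \<in> const_point ` Z"
    then have "minimal_set X shift {y}"
      using const_point_mem unfolding minimal_set_def by (auto dest: subset_singletonD)
    then show "y \<in> minimal_points X shift"
      unfolding minimal_points_def by blast
  qed
  show "minimal_points X shift \<subseteq> const_point ` Z"
  proof
    fix x assume "x \<in> minimal_points X shift"
    then obtain K where K: "minimal_set X shift K" "x \<in> K"
      unfolding minimal_points_def by blast
    then have "x \<in> X" unfolding minimal_set_def by blast
    then show "x \<in> const_point ` Z"
      using unmarked_eq_const_point minimal_set_unmarked[OF K] label_mem by blast
  qed
qed

lemma minimal_points_homeomorphic: "minimal_points X shift homeomorphic Z"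
proof -
  have "Z homeomorphic const_point ` Z"
    by (rule homeomorphic_compact[OF compact_Z continuous_on_const_point refl
          inj_on_subset[OF inj_const_point subset_UNIV]])
  then show ?thesis
    unfolding minimal_points_eq using homeomorphic_sym by blast
qed

lemma const_point_in_omega_N:
  assumes s: "\<And>k. k \<le> s k"
    and windows: "\<And>j. eventually (\<lambda>k. mark x (s k + j) = 0 \<and> label x (s k + j) = w k) sequentially"
    and "w \<longlonglongrightarrow> l"
  shows "const_point l \<in> omega_N X shift x"
proof -
  have "(\<lambda>k. (shift ^^ s k) x) \<longlonglongrightarrow> const_point l"
    by (rule funpow_shift_tendsto_const_point[OF windows \<open>w \<longlonglongrightarrow> l\<close>])
  moreover have "eventually (\<lambda>k. mark x (Suc (s k) + j) = 0 \<and> label x (Suc (s k) + j) = w k)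
      sequentially" for j
    using windows[of "Suc j"] by simp
  then have "(\<lambda>k. (shift ^^ Suc (s k)) x) \<longlonglongrightarrow> const_point l"
    by (rule funpow_shift_tendsto_const_point[OF _ \<open>w \<longlonglongrightarrow> l\<close>])
  ultimately show ?thesis
    using omega_N_if_consecutive_limits[OF hitting_times_contain_parity_class s] by blast
qed

lemma omega_N_nonempty:
  assumes x: "x \<in> X"
  shows "omega_N X shift x \<noteq> {}"
proof -
  have "\<forall>k. \<exists>t\<ge>k. \<forall>j<k. t + j \<notin> marks x"
    using lacunary_not_syndetic[OF lacunary_marks[OF x]] by blast
  then obtain t where t: "\<And>k. k \<le> t k" "\<And>k j. j < k \<Longrightarrow> t k + j \<notin> marks x"
    by metis
  have window: "mark x (t k + j) = 0 \<and> label x (t k + j) = label x (t k)" if "j < k" for j k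
  proof
    show "mark x (t k + j) = 0"
      using t(2)[OF that] mark_0_or_1[OF x, of "t k + j"] by (simp add: marks_def)
    have "t k + i \<notin> marks x" if "i < j" for i
      using t(2) that \<open>j < k\<close> by simp
    then show "label x (t k + j) = label x (t k)"
      by (rule label_constant_while_unmarked[OF x])
  qed
  have "\<forall>k. label x (t k) \<in> Z" using label_mem[OF x] by blast
  then obtain l r where "l \<in> Z" "strict_mono r" and lim: "((\<lambda>k. label x (t k)) \<circ> r) \<longlonglongrightarrow> l"
    using seq_compactE[OF compact_imp_seq_compact[OF compact_Z]] by metis
  have r: "k \<le> r k" for k using seq_suble[OF \<open>strict_mono r\<close>] .
  have "const_point l \<in> omega_N X shift x"
  proof (rule const_point_in_omega_N[OF _ _ lim])
    show "k \<le> t (r k)" for k using r[of k] t(1)[of "r k"] by simp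
    show "eventually (\<lambda>k. mark x (t (r k) + j) = 0 \<and>
        label x (t (r k) + j) = ((\<lambda>k. label x (t k)) \<circ> r) k) sequentially" for j
      using eventually_ge_at_top[of "Suc j"]
    proof eventually_elim
      case (elim k)
      then have "j < r k" using r[of k] by simp
      then show ?case using window[of j "r k"] by simp
    qed
  qed
  then show ?thesis by blast
qed

lemma transitive_compact_marked_shift: "transitive_compact X shift"
  unfolding transitive_compact_def using omega_N_nonempty by blast

definition parity_class :: "nat \<Rightarrow> (nat \<Rightarrow> real) set" where
  "parity_class r = {y. \<forall>j. mark y j = 0 \<or> even (j + r)}"

lemma closed_parity_class: "closed (parity_class r)"
  unfolding parity_class_def
  by (intro closed_Collect_all closed_Collect_disj closed_Collect_eq continuous_on_mark
      continuous_on_const closed_Collect_const)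

lemma const_point_if_in_parity_classes:
  assumes "y \<in> X" "y \<in> parity_class r" "y \<in> parity_class (Suc r)"
  shows "y \<in> const_point ` Z"
proof -
  have "mark y j = 0" for j
  proof -
    have "\<not> (even (j + r) \<and> even (j + Suc r))" by (cases "even r") simp_all
    then show ?thesis using assms(2,3) unfolding parity_class_def by blast
  qed
  then have "marks y = {}" by (simp add: marks_def)
  then show ?thesis
    using unmarked_eq_const_point[OF assms(1)] label_mem[OF assms(1)] by blast
qed

lemma orbit_closure_parity_class:
  assumes x: "x \<in> X" and r: "\<And>j. j \<in> marks x \<Longrightarrow> even (j + r)"
  shows "closure {(shift ^^ i) x | i. even (a + i)} \<subseteq> X \<inter> parity_class (r + a)"
proof (intro closure_minimal closed_Int closed_parity_class subsetI)
  show "closed X" by (rule compact_imp_closed[OF compact_marked_space[OF compact_Z]])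
  fix y assume "y \<in> {(shift ^^ i) x | i. even (a + i)}"
  then obtain i where i: "even (a + i)" "y = (shift ^^ i) x" by blast
  have "mark y j = 0 \<or> even (j + (r + a))" for j
  proof (cases "j + i \<in> marks x")
    case True
    have "even (j + (r + a))" using r[OF True] i(1) by presburger
    then show ?thesis by simp
  next
    case False
    then show ?thesis using mark_0_or_1[OF x, of "j + i"] i(2) by (simp add: marks_def)
  qed
  then show "y \<in> X \<inter> parity_class (r + a)"
    using funpow_shift_mem[OF x] i(2) by (simp add: parity_class_def)
qed

lemma omega_N_subset_parity_orbit:
  "omega_N X shift x \<subseteq> closure {(shift ^^ i) x | i. even (a + b + i)}"
proof -
  have "hitting_times shift (mark_cylinder a) (mark_cylinder b) \<in> hitting_family X shift"
    unfolding hitting_family_def using opene_mark_cylinder by blast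
  then have "omega_N X shift x \<subseteq>
      closure {(shift ^^ i) x | i. i \<in> hitting_times shift (mark_cylinder a) (mark_cylinder b)}"
    unfolding omega_N_def by blast
  also have "\<dots> \<subseteq> closure {(shift ^^ i) x | i. even (a + b + i)}"
    using hitting_times_mark_cylinder_even by (intro closure_mono) blast
  finally show ?thesis .
qed

lemma omega_N_subset:
  assumes x: "x \<in> X"
  shows "omega_N X shift x \<subseteq> const_point ` Z"
proof -
  obtain r where r: "\<And>j. j \<in> marks x \<Longrightarrow> even (j + r)"
    using marks_common_parity[OF x] by blast
  have "omega_N X shift x \<subseteq> X \<inter> parity_class (r + (0 + 1))"
    by (rule order_trans[OF omega_N_subset_parity_orbit orbit_closure_parity_class[OF x r]])
  moreover have "omega_N X shift x \<subseteq> X \<inter> parity_class (r + (0 + 0))"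
    by (rule order_trans[OF omega_N_subset_parity_orbit orbit_closure_parity_class[OF x r]])
  ultimately show ?thesis
    using const_point_if_in_parity_classes by fastforce
qed

end

section \<open>A point whose \<open>\<omega>\<^sub>\<N>\<close> consists of all minimal points\<close>

lemma floorlog_eqI:
  assumes "1 < b" "b ^ L \<le> x" "x < b ^ Suc L"
  shows "floorlog b x = Suc L"
proof (rule antisym)
  show "floorlog b x \<le> Suc L" by (rule floorlog_leI) (use assms in simp_all)
  show "Suc L \<le> floorlog b x" by (rule floorlog_ge_SucI) (use assms in simp_all)
qed

lemma not_power_between:
  fixes b :: nat
  assumes "1 < b" "b ^ L < y" "y < b ^ Suc L"
  shows "y \<notin> range ((^) b)"
proof
  assume "y \<in> range ((^) b)"
  then obtain a where "y = b ^ a" by blast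
  then have "L < a" "a < Suc L"
    using assms power_strict_increasing_iff[OF assms(1)] by metis+
  then show False by simp
qed

lemma floorlog_Suc_eq:
  fixes b :: nat
  assumes "1 < b" "Suc x \<notin> range ((^) b)" "0 < x"
  shows "floorlog b (Suc x) = floorlog b x"
proof -
  define m where "m = floorlog b x"
  have "0 < m"
    using assms(1,3) unfolding m_def floorlog_def by simp
  have bounds: "b ^ (m - 1) \<le> x" "x < b ^ m"
    using floorlog_bounds[OF assms(3,1)] unfolding m_def by simp_all
  then have "Suc x \<le> b ^ m" by simp
  moreover have "Suc x \<noteq> b ^ m" using assms(2) by blast
  ultimately have "Suc x < b ^ Suc (m - 1)" using \<open>0 < m\<close> by simp
  moreover have "b ^ (m - 1) \<le> Suc x" using bounds(1) by simp
  ultimately have "floorlog b (Suc x) = Suc (m - 1)"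
    by (rule floorlog_eqI[OF assms(1), rotated])
  then show ?thesis using \<open>0 < m\<close> unfolding m_def by simp
qed

text \<open>Between consecutive marks the label is constant, and every \<open>q n\<close> labels infinitely many
  of these blocks, whose lengths grow without bound.\<close>

definition enumerating_point :: "(nat \<Rightarrow> nat \<Rightarrow> real) \<Rightarrow> nat \<Rightarrow> real" where
  "enumerating_point q = marked_point (\<lambda>j. if Suc (Suc j) \<in> range ((^) 4) then 1 else 0)
     (\<lambda>j. q (fst (prod_decode (floorlog 4 (Suc j) - 1))))"

lemma marks_enumerating_point:
  "marks (enumerating_point q) = {j. Suc (Suc j) \<in> range ((^) 4)}"
  by (simp add: marks_def enumerating_point_def)

lemma enumerating_point_window:
  assumes "4 ^ L \<le> Suc p" "Suc (Suc p) < 4 ^ Suc L"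
  shows "mark (enumerating_point q) p = 0 \<and> label (enumerating_point q) p = q (fst (prod_decode L))"
proof
  have "Suc (Suc p) \<notin> range ((^) (4::nat))"
    by (rule not_power_between[of 4 L]) (use assms in simp_all)
  then show "mark (enumerating_point q) p = 0"
    by (simp add: enumerating_point_def)
  have "floorlog 4 (Suc p) = Suc L"
    by (rule floorlog_eqI) (use assms in simp_all)
  then show "label (enumerating_point q) p = q (fst (prod_decode L))"
    by (simp add: enumerating_point_def)
qed

context marked_system
begin

lemma enumerating_point_mem:
  assumes q: "range q \<subseteq> Z"
  shows "enumerating_point q \<in> X"
  unfolding mem_marked_space_iff marks_enumerating_point
proof (intro conjI allI impI ballI)
  show "mark (enumerating_point q) j = 0 \<or> mark (enumerating_point q) j = 1"
    "label (enumerating_point q) j \<in> Z" for j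
    using q by (auto simp: enumerating_point_def)
  show "label (enumerating_point q) (Suc j) = label (enumerating_point q) j"
    if "j \<notin> {j. Suc (Suc j) \<in> range ((^) 4)}" for j
    using floorlog_Suc_eq[of 4 "Suc j"] that by (simp add: enumerating_point_def)
  have even_mark: "even j" if marked: "j \<in> {j. Suc (Suc j) \<in> range ((^) 4)}" for j
  proof -
    obtain a where a: "Suc (Suc j) = 4 ^ a" using marked by blast
    then have "a \<noteq> 0" by (rule_tac notI) simp
    then have "even (Suc (Suc j))" unfolding a by simp
    then show ?thesis by simp
  qed
  show "even (i + j)" if "i \<in> {j. Suc (Suc j) \<in> range ((^) 4)}"
    "j \<in> {j. Suc (Suc j) \<in> range ((^) 4)}" for i j
    using even_mark[OF that(1)] even_mark[OF that(2)] by simp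
  show "lacunary {j. Suc (Suc j) \<in> range ((^) 4)}"
  proof (rule lacunary_if_sparse)
    fix j k assume "j \<in> {j. Suc (Suc j) \<in> range ((^) 4)}" "k \<in> {j. Suc (Suc j) \<in> range ((^) 4)}"
      "j < k"
    then obtain a b where ab: "Suc (Suc j) = 4 ^ a" "Suc (Suc k) = 4 ^ b" "j < k" by blast
    then have "(4::nat) ^ a < 4 ^ b" by (metis Suc_less_eq)
    then have "a < b" by (rule power_less_imp_less_exp[rotated]) simp
    then have "(4::nat) ^ Suc a \<le> 4 ^ b" by (intro power_increasing) simp_all
    then show "3 * j \<le> k" using ab by simp
  qed
qed

lemma const_point_in_omega_N_enumerating_point:
  assumes q: "range q \<subseteq> Z"
  shows "const_point (q n) \<in> omega_N X shift (enumerating_point q)"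
proof -
  define L where "L t = prod_encode (n, t)" for t
  have "t < 4 ^ L t" for t
  proof -
    have "t \<le> L t" unfolding L_def by (rule le_prod_encode_2)
    also have "L t < 2 ^ L t" by simp
    also have "(2::nat) ^ L t \<le> 4 ^ L t" by (rule power_mono) simp_all
    finally show ?thesis .
  qed
  note L_small = this
  show ?thesis
  proof (rule const_point_in_omega_N[where s = "\<lambda>t. 4 ^ L t" and w = "\<lambda>_. q n"])
    show "t \<le> 4 ^ L t" for t using L_small[of t] by simp
    show "eventually (\<lambda>t. mark (enumerating_point q) (4 ^ L t + j) = 0 \<and>
        label (enumerating_point q) (4 ^ L t + j) = q n) sequentially" for j
      using eventually_ge_at_top[of "Suc (Suc j)"]
    proof eventually_elim
      case (elim t)
      then have "Suc (Suc (4 ^ L t + j)) < 4 ^ Suc (L t)" using L_small[of t] by simp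
      then show ?case
        using enumerating_point_window[of "L t" "4 ^ L t + j" q] by (simp add: L_def)
    qed
  qed simp
qed

lemma omega_N_enumerating_point:
  assumes q: "range q \<subseteq> Z" "Z \<subseteq> closure (range q)"
  shows "omega_N X shift (enumerating_point q) = const_point ` Z"
proof
  show "omega_N X shift (enumerating_point q) \<subseteq> const_point ` Z"
    by (rule omega_N_subset[OF enumerating_point_mem[OF q(1)]])
  have "const_point ` range q \<subseteq> omega_N X shift (enumerating_point q)"
    using const_point_in_omega_N_enumerating_point[OF q(1)] by blast
  then have "const_point ` closure (range q) \<subseteq> omega_N X shift (enumerating_point q)"
    by (rule image_closure_subset[OF continuous_on_const_point closed_omega_N])
  then show "const_point ` Z \<subseteq> omega_N X shift (enumerating_point q)"
    using q(2) by blast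
qed

end

theorem theorem6p4:
  fixes Z :: "'a::metric_space set"
  assumes "compact Z" and "Z \<noteq> {}"
  shows "\<exists>(X :: (nat \<Rightarrow> real) set) T.
           dynsys X T \<and> transitive_compact X T \<and> \<not> totally_transitive X T \<and>
           minimal_points X T homeomorphic Z \<and>
           (\<forall>x\<in>minimal_points X T. T x = x) \<and>
           (\<exists>x\<in>X. minimal_points X T = omega_N X T x)"
proof -
  obtain Z' :: "(nat \<Rightarrow> real) set" and q :: "nat \<Rightarrow> nat \<Rightarrow> real"
    where Z': "compact Z'" "Z' homeomorphic Z" "range q \<subseteq> Z'" "Z' \<subseteq> closure (range q)"
    by (rule compact_embeds_in_sequence_space[OF assms])
  interpret marked_system Z'
    using Z'(1,3) by unfold_locales blast+
  show ?thesis
  proof (intro exI conjI)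
    show "dynsys X shift" by (rule dynsys_marked_shift)
    show "transitive_compact X shift" by (rule transitive_compact_marked_shift)
    show "\<not> totally_transitive X shift" by (rule not_totally_transitive)
    show "minimal_points X shift homeomorphic Z"
      using minimal_points_homeomorphic Z'(2) by (rule homeomorphic_trans)
    show "\<forall>x\<in>minimal_points X shift. shift x = x"
      unfolding minimal_points_eq by simp
    show "\<exists>x\<in>X. minimal_points X shift = omega_N X shift x"
      using enumerating_point_mem[OF Z'(3)] omega_N_enumerating_point[OF Z'(3,4)]
      unfolding minimal_points_eq by metis
  qed
qed

end
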